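(* Let $\hat U_1$ and $\hat U_2$ be real balanced four-splitters with four-splitter matrices $\mathbf R_1$ and $\mathbf R_2$, respectively. Then $\mathbf R_1$ can be transformed into $\mathbf R_2$ by some sequence of row permutations, row negations, and negation of any single column. (Equivalently: let $\mathbf R_1,\mathbf R_2\in\mathrm{O}(4)$ be real orthogonal $4\times 4$ matrices all of whose entries have absolute value $\tfrac12$; then for any fixed column index $c\in\{1,2,3,4\}$, $\mathbf R_2$ can be obtained from $\mathbf R_1$ by a finite sequence of operations each of which is a permutation of the rows, a negation of one row, or a negation of column $c$.)
   Context: For $N$ bosonic modes with annihilation operators $\hat{\mathbf a}=(\hat a_1,\dots,\hat a_N)^T$, a passive linear-optical unitary $\hat U$ is associated with the matrix $\mathbf U\in\mathrm U(N)$ defined by $\hat U^\dagger \hat{\mathbf a}\hat U=\mathbf U\hat{\mathbf a}$. $\hat U$ is a balanced $n$-splitter ($n=N$) if all entries of $\mathbf U$ have the same magnitude; $\mathbf U$ is its $n$-splitter matrix. It is a real balanced $n$-splitter if $\mathbf U\in\mathrm O(n)$ (all entries real). For $n=4$, all entries of a real balanced four-splitter matrix are therefore $\pm\tfrac12$. *)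

theory Defs
  imports "HOL-Analysis.Analysis"
begin

definition real_balanced_four_splitter :: "real^4^4 \<Rightarrow> bool" where
  "real_balanced_four_splitter R \<longleftrightarrow>
     orthogonal_matrix R \<and> (\<forall>i j. \<bar>R $ i $ j\<bar> = 1/2)"

definition permute_rows :: "(4 \<Rightarrow> 4) \<Rightarrow> real^4^4 \<Rightarrow> real^4^4" where
  "permute_rows p R = (\<chi> i j. R $ p i $ j)"

definition negate_row :: "4 \<Rightarrow> real^4^4 \<Rightarrow> real^4^4" where
  "negate_row k R = (\<chi> i j. if i = k then - R $ i $ j else R $ i $ j)"

definition negate_col :: "4 \<Rightarrow> real^4^4 \<Rightarrow> real^4^4" where
  "negate_col c R = (\<chi> i j. if j = c then - R $ i $ j else R $ i $ j)"

inductive splitter_step :: "4 \<Rightarrow> real^4^4 \<Rightarrow> real^4^4 \<Rightarrow> bool" for c where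
  perm: "p permutes UNIV \<Longrightarrow> splitter_step c R (permute_rows p R)"
| negrow: "splitter_step c R (negate_row k R)"
| negcol: "splitter_step c R (negate_col c R)"

definition splitter_reachable :: "4 \<Rightarrow> real^4^4 \<Rightarrow> real^4^4 \<Rightarrow> bool" where
  "splitter_reachable c R1 R2 \<longleftrightarrow> (splitter_step c)\<^sup>*\<^sup>* R1 R2"

end

theory Submission
  imports Defs
begin

text \<open>For a vector \<open>u\<close> with entries \<open>\<plusminus>1/2\<close> let \<open>sign_parity u = \<Prod>j. 2 u\<^sub>j = \<plusminus>1\<close>.
For two such vectors in \<open>\<real>\<^sup>4\<close> the signs \<open>t\<^sub>j = 4 u\<^sub>j w\<^sub>j\<close> sum to \<open>4 \<langle>u, w\<rangle>\<close>,
and four signs sum to zero iff exactly two of them are \<open>-1\<close>. Hence orthogonal vectors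
have equal parity, and distinct vectors of equal parity that agree in one coordinate are
orthogonal. So all rows of a balanced four-splitter share one parity; negating column \<open>c\<close>
flips it, and row negations make column \<open>c\<close> constant \<open>1/2\<close>. Any two splitters thus reach
normal forms \<open>N\<^sub>1\<close>, \<open>N\<^sub>2\<close> with column \<open>c\<close> equal to \<open>1/2\<close> and parity \<open>1\<close>. A row of
\<open>N\<^sub>2\<close> that is not a row of \<open>N\<^sub>1\<close> would be orthogonal to every row of the orthogonal matrix
\<open>N\<^sub>1\<close>, hence zero; so \<open>N\<^sub>2\<close> is a row permutation of \<open>N\<^sub>1\<close>.\<close>

definition pm_half_vec :: "real^'n \<Rightarrow> bool" where
  "pm_half_vec u \<longleftrightarrow> (\<forall>j. \<bar>u $ j\<bar> = 1/2)"

definition sign_parity :: "real^'n \<Rightarrow> real" where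
  "sign_parity u = (\<Prod>j\<in>UNIV. 2 * u $ j)"

lemma pm_half_vec_sign:
  assumes "pm_half_vec u"
  shows "2 * u $ j = 1 \<or> 2 * u $ j = -1"
proof -
  have "\<bar>u $ j\<bar> = 1/2"
    using assms unfolding pm_half_vec_def by blast
  then show ?thesis by linarith
qed

lemma sign_mult_cases:
  "(a::real) = 1 \<or> a = -1 \<Longrightarrow> b = 1 \<or> b = -1 \<Longrightarrow> a * b = 1 \<or> a * b = -1"
  by auto

lemma inner_self_pm_half_vec:
  fixes u :: "real^'n"
  assumes "pm_half_vec u"
  shows "inner u u = CARD('n) / 4"
proof -
  have sq: "u $ j * u $ j = 1/4" for j
  proof -
    have half: "\<bar>u $ j\<bar> = 1/2" using assms unfolding pm_half_vec_def by blast
    have "u $ j * u $ j = \<bar>u $ j\<bar> * \<bar>u $ j\<bar>" by simp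
    also have "\<dots> = 1/4" by (simp only: half)
    finally show ?thesis .
  qed
  have "inner u u = (\<Sum>j\<in>UNIV. u $ j * u $ j)" by (simp add: inner_vec_def)
  also have "\<dots> = (\<Sum>j\<in>(UNIV :: 'n set). 1/4)" by (simp only: sq)
  finally show ?thesis by simp
qed

lemma sign_parity_cases:
  assumes "pm_half_vec u"
  shows "sign_parity u = 1 \<or> sign_parity u = -1"
proof -
  have "\<bar>sign_parity u\<bar> = (\<Prod>j\<in>UNIV. \<bar>2 * u $ j\<bar>)"
    unfolding sign_parity_def by (rule abs_prod)
  also have "\<dots> = 1"
  proof -
    have "\<bar>2 * u $ j\<bar> = 1" for j
    proof -
      have "\<bar>u $ j\<bar> = 1/2" using assms unfolding pm_half_vec_def by blast
      then show ?thesis by (simp add: abs_mult)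
    qed
    then show ?thesis by simp
  qed
  finally show ?thesis by linarith
qed

lemma sign_parity_uminus:
  fixes u :: "real^'n"
  assumes "even CARD('n)"
  shows "sign_parity (- u) = sign_parity u"
  using assms by (simp add: sign_parity_def prod_uminus)

lemma sign_parity_negate_component:
  "sign_parity (\<chi> j. if j = c then - u $ j else u $ j) = - sign_parity u"
proof -
  have "sign_parity (\<chi> j. if j = c then - u $ j else u $ j)
      = - (2 * u $ c) * (\<Prod>j\<in>UNIV - {c}. 2 * u $ j)"
    unfolding sign_parity_def by (simp add: prod.remove[of UNIV c])
  also have "\<dots> = - sign_parity u"
    unfolding sign_parity_def by (simp add: prod.remove[of UNIV c])
  finally show ?thesis .
qed

lemma sum_signs_4_eq_0_iff:
  fixes t :: "4 \<Rightarrow> real"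
  assumes "\<And>j. t j = 1 \<or> t j = -1"
  shows "(\<Sum>j\<in>UNIV. t j) = 0 \<longleftrightarrow> (\<Prod>j\<in>UNIV. t j) = 1 \<and> (\<exists>i k. t i \<noteq> t k)"
proof -
  have nonconst: "(\<exists>i k. t i \<noteq> t k) \<longleftrightarrow> \<not> (t 1 = t 2 \<and> t 1 = t 3 \<and> t 1 = t 4)"
    by (metis exhaust_4)
  have prod: "(\<Prod>j\<in>UNIV. t j) = t 1 * t 2 * t 3 * t 4"
    unfolding UNIV_4 by (simp add: mult.assoc)
  show ?thesis
    unfolding sum_4 prod nonconst using assms[of 1] assms[of 2] assms[of 3] assms[of 4]
    by (elim disjE) simp_all
qed

lemma pm_half_vec_inner_eq_0_iff:
  fixes u w :: "real^4"
  assumes u: "pm_half_vec u" and w: "pm_half_vec w"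
  shows "inner u w = 0 \<longleftrightarrow>
    sign_parity u = sign_parity w \<and> (\<exists>i k. u $ i * w $ i \<noteq> u $ k * w $ k)"
proof -
  define t where "t j = (2 * u $ j) * (2 * w $ j)" for j
  have t_sign: "t j = 1 \<or> t j = -1" for j
    unfolding t_def using sign_mult_cases pm_half_vec_sign u w by blast
  have "(\<Sum>j\<in>UNIV. t j) = 4 * inner u w"
    by (simp add: t_def inner_vec_def sum_4 algebra_simps)
  moreover have "(\<Prod>j\<in>UNIV. t j) = sign_parity u * sign_parity w"
    by (simp add: t_def sign_parity_def prod.distrib)
  moreover have "sign_parity u * sign_parity w = 1 \<longleftrightarrow> sign_parity u = sign_parity w"
    using sign_parity_cases[OF u] sign_parity_cases[OF w] by auto
  moreover have "t i \<noteq> t k \<longleftrightarrow> u $ i * w $ i \<noteq> u $ k * w $ k" for i k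
    by (simp add: t_def)
  ultimately show ?thesis
    using sum_signs_4_eq_0_iff[of t, OF t_sign] by simp
qed

lemma orthogonal_pm_half_vecs_same_sign_parity:
  fixes u w :: "real^4"
  assumes "pm_half_vec u" and "pm_half_vec w" and "inner u w = 0"
  shows "sign_parity u = sign_parity w"
  using pm_half_vec_inner_eq_0_iff assms by blast

lemma same_sign_parity_pm_half_vecs_orthogonal:
  fixes u w :: "real^4"
  assumes u: "pm_half_vec u" and w: "pm_half_vec w"
    and "u $ c = w $ c" and "u \<noteq> w" and "sign_parity u = sign_parity w"
  shows "inner u w = 0"
proof -
  obtain k where "u $ k \<noteq> w $ k"
    using \<open>u \<noteq> w\<close> by (auto simp: vec_eq_iff)
  then have "u $ k = - w $ k"
    using pm_half_vec_sign[OF u, of k] pm_half_vec_sign[OF w, of k] by auto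
  moreover have "w $ c \<noteq> 0"
    using pm_half_vec_sign[OF w, of c] by auto
  ultimately have "u $ k * w $ k \<le> 0" and "u $ c * w $ c > 0"
    using \<open>u $ c = w $ c\<close> by (auto simp: zero_less_mult_iff)
  then have "u $ c * w $ c \<noteq> u $ k * w $ k" by linarith
  then show ?thesis
    using pm_half_vec_inner_eq_0_iff[OF u w] \<open>sign_parity u = sign_parity w\<close> by blast
qed

lemma orthogonal_matrix_rows_orthogonal_imp_zero:
  fixes Q :: "real^'n^'n"
  assumes "orthogonal_matrix Q" and "\<And>i. inner (Q $ i) v = 0"
  shows "v = 0"
proof -
  have "Q *v v = 0"
    using assms(2) by (simp add: vec_eq_iff matrix_vector_mul_component)
  then have "transpose Q *v (Q *v v) = 0" by simp
  then show ?thesis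
    using assms(1) by (simp add: orthogonal_matrix matrix_vector_mul_assoc)
qed

lemma orthogonal_matrix_inj_rows:
  fixes Q :: "real^'n^'n"
  assumes "orthogonal_matrix Q"
  shows "inj (($) Q)"
proof (rule injI)
  have unit: "inner (Q $ i) (Q $ i) = 1" and orth: "i \<noteq> k \<Longrightarrow> inner (Q $ i) (Q $ k) = 0" for i k
    using assms
    by (simp_all add: orthogonal_matrix_orthonormal_rows row_def vec_nth_inverse norm_eq_1 orthogonal_def)
  fix i k assume "Q $ i = Q $ k"
  then show "i = k"
    using unit[of i] orth[of i k] by fastforce
qed

lemma real_balanced_four_splitter_iff_rows:
  "real_balanced_four_splitter R \<longleftrightarrow>
    (\<forall>i. pm_half_vec (R $ i)) \<and> (\<forall>i k. i \<noteq> k \<longrightarrow> inner (R $ i) (R $ k) = 0)"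
proof -
  have "norm (R $ i) = 1" if "pm_half_vec (R $ i)" for i
    using inner_self_pm_half_vec[OF that] by (simp add: norm_eq_1)
  then show ?thesis
    unfolding real_balanced_four_splitter_def orthogonal_matrix_orthonormal_rows pm_half_vec_def
    by (auto simp: row_def vec_nth_inverse orthogonal_def)
qed

lemma permute_rows_nth [simp]: "permute_rows p R $ i = R $ p i"
  by (simp add: permute_rows_def vec_eq_iff)

lemma negate_row_nth [simp]: "negate_row k R $ i = (if i = k then - R $ i else R $ i)"
  by (simp add: negate_row_def vec_eq_iff)

lemma negate_col_nth [simp]: "negate_col c R $ i = (\<chi> j. if j = c then - R $ i $ j else R $ i $ j)"
  by (simp add: negate_col_def vec_eq_iff)

lemma splitter_step_sym: "symp (splitter_step c)"
proof (rule sympI)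
  fix R S assume "splitter_step c R S"
  then show "splitter_step c S R"
  proof cases
    case (perm p)
    then have "R = permute_rows (inv p) S"
      by (simp add: vec_eq_iff permutes_inverses)
    then show ?thesis
      using perm splitter_step.perm[OF permutes_inv] by metis
  next
    case (negrow k)
    then have "R = negate_row k S" by (simp add: vec_eq_iff)
    then show ?thesis by (simp add: splitter_step.negrow)
  next
    case negcol
    then have "R = negate_col c S" by (simp add: vec_eq_iff)
    then show ?thesis by (simp add: splitter_step.negcol)
  qed
qed

lemma splitter_reachable_step: "splitter_step c R S \<Longrightarrow> splitter_reachable c R S"
  by (simp add: splitter_reachable_def)

lemma splitter_reachable_trans [trans]:
  "splitter_reachable c R S \<Longrightarrow> splitter_reachable c S T \<Longrightarrow> splitter_reachable c R T"
  unfolding splitter_reachable_def by (rule rtranclp_trans)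

lemma splitter_reachable_sym: "splitter_reachable c R S \<Longrightarrow> splitter_reachable c S R"
  unfolding splitter_reachable_def using sympD[OF symp_rtranclp[OF splitter_step_sym]] .

lemma splitter_step_balanced:
  assumes "splitter_step c R S" and "real_balanced_four_splitter R"
  shows "real_balanced_four_splitter S"
  using assms(1)
proof cases
  case (perm p)
  have "inj p" using perm(2) by (rule permutes_inj)
  then show ?thesis
    using assms(2) perm unfolding real_balanced_four_splitter_iff_rows by (auto simp: inj_eq)
next
  case (negrow k)
  then show ?thesis
    using assms(2) unfolding real_balanced_four_splitter_iff_rows pm_half_vec_def by auto
next
  case negcol
  have "inner (S $ i) (S $ k) = inner (R $ i) (R $ k)" for i k
    unfolding negcol inner_vec_def by (rule sum.cong) auto
  then show ?thesis
    using assms(2) negcol unfolding real_balanced_four_splitter_iff_rows pm_half_vec_def by auto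
qed

lemma splitter_reachable_balanced:
  assumes "splitter_reachable c R S" and "real_balanced_four_splitter R"
  shows "real_balanced_four_splitter S"
  using assms unfolding splitter_reachable_def
  by (induction rule: rtranclp_induct) (auto intro: splitter_step_balanced)

definition negate_rows :: "4 set \<Rightarrow> real^4^4 \<Rightarrow> real^4^4" where
  "negate_rows K R = (\<chi> i. if i \<in> K then - R $ i else R $ i)"

lemma splitter_reachable_negate_rows: "splitter_reachable c R (negate_rows K R)"
proof -
  have "finite K" by simp
  then show ?thesis
  proof (induction K rule: finite_induct)
    case empty
    have "negate_rows {} R = R" by (simp add: negate_rows_def vec_eq_iff)
    then show ?case by (simp add: splitter_reachable_def)
  next
    case (insert k K)
    have "negate_rows (insert k K) R = negate_row k (negate_rows K R)"
      using insert.hyps(2) by (simp add: negate_rows_def vec_eq_iff)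
    then show ?case
      using insert.IH splitter_reachable_trans splitter_reachable_step splitter_step.negrow by metis
  qed
qed

lemma balanced_sign_parity_rows_eq:
  assumes "real_balanced_four_splitter R"
  shows "sign_parity (R $ i) = sign_parity (R $ k)"
  using assms orthogonal_pm_half_vecs_same_sign_parity
  unfolding real_balanced_four_splitter_iff_rows by (cases "i = k") auto

definition splitter_normal_form :: "4 \<Rightarrow> real^4^4 \<Rightarrow> bool" where
  "splitter_normal_form c N \<longleftrightarrow>
     real_balanced_four_splitter N \<and> (\<forall>i. N $ i $ c = 1/2 \<and> sign_parity (N $ i) = 1)"

lemma exists_splitter_normal_form:
  assumes "real_balanced_four_splitter R"
  obtains N where "splitter_reachable c R N" and "splitter_normal_form c N"
proof -
  define R' where "R' = (if sign_parity (R $ 1) = 1 then R else negate_col c R)"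
  have R_R': "splitter_reachable c R R'"
    unfolding R'_def using splitter_reachable_step splitter_step.negcol
    by (simp add: splitter_reachable_def)
  have "sign_parity (R $ 1) = 1 \<or> sign_parity (R $ 1) = -1"
    using assms sign_parity_cases unfolding real_balanced_four_splitter_iff_rows by blast
  then have parity_R': "sign_parity (R' $ i) = 1" for i
    using balanced_sign_parity_rows_eq[OF assms, of i 1] sign_parity_negate_component[of c "R $ i"]
    unfolding R'_def by auto
  define N where "N = negate_rows {i. R' $ i $ c < 0} R'"
  have R'_N: "splitter_reachable c R' N"
    unfolding N_def by (rule splitter_reachable_negate_rows)
  have balanced_R': "real_balanced_four_splitter R'"
    using splitter_reachable_balanced[OF R_R' assms] .
  have N_row: "N $ i = (if R' $ i $ c < 0 then - R' $ i else R' $ i)" for i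
    by (simp add: N_def negate_rows_def)
  have "N $ i $ c = 1/2" for i
  proof -
    have "\<bar>R' $ i $ c\<bar> = 1/2"
      using balanced_R' unfolding real_balanced_four_splitter_def by blast
    then show ?thesis unfolding N_row by auto
  qed
  moreover have "sign_parity (N $ i) = 1" for i
    using parity_R' sign_parity_uminus[where 'n = 4] N_row by simp
  moreover have "real_balanced_four_splitter N"
    using splitter_reachable_balanced[OF R'_N balanced_R'] .
  ultimately show ?thesis
    using that splitter_reachable_trans[OF R_R' R'_N] unfolding splitter_normal_form_def by blast
qed

lemma splitter_normal_form_row_mem:
  assumes N1: "splitter_normal_form c N1" and N2: "splitter_normal_form c N2"
  shows "\<exists>k. N1 $ k = N2 $ i"
proof (rule ccontr)
  assume no_match: "\<nexists>k. N1 $ k = N2 $ i"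
  have half: "pm_half_vec (N1 $ k)" "pm_half_vec (N2 $ i)" for k
    using N1 N2 unfolding splitter_normal_form_def real_balanced_four_splitter_iff_rows by blast+
  have same: "N1 $ k $ c = N2 $ i $ c" "sign_parity (N1 $ k) = sign_parity (N2 $ i)" for k
    using N1 N2 unfolding splitter_normal_form_def by metis+
  have "inner (N1 $ k) (N2 $ i) = 0" for k
    using same_sign_parity_pm_half_vecs_orthogonal[OF half same(1) _ same(2)] no_match by blast
  then have "N2 $ i = 0"
    using N1 orthogonal_matrix_rows_orthogonal_imp_zero
    unfolding splitter_normal_form_def real_balanced_four_splitter_def by blast
  moreover have "N2 $ i $ c = 1/2"
    using N2 unfolding splitter_normal_form_def by blast
  ultimately show False by simp
qed

lemma permute_rows_if_rows_mem:
  fixes A B :: "real^4^4"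
  assumes "\<And>i. \<exists>k. A $ k = B $ i" and "inj (($) B)"
  obtains p where "p permutes UNIV" and "B = permute_rows p A"
proof -
  define p where "p i = (SOME k. A $ k = B $ i)" for i
  have A_p: "A $ p i = B $ i" for i
    unfolding p_def using someI_ex[OF assms(1)] .
  have "inj p"
    using assms(2) A_p by (metis injD injI)
  then have "p permutes UNIV"
    using inj_imp_permutes[of p UNIV] by simp
  moreover have "B = permute_rows p A"
    using A_p by (simp add: vec_eq_iff)
  ultimately show ?thesis using that by blast
qed

theorem theorem1:
  fixes R1 R2 :: "real^4^4" and c :: 4
  assumes "real_balanced_four_splitter R1"
      and "real_balanced_four_splitter R2"
  shows "splitter_reachable c R1 R2"
proof -
  obtain N1 where R1_N1: "splitter_reachable c R1 N1" and N1: "splitter_normal_form c N1"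
    using exists_splitter_normal_form assms(1) by blast
  obtain N2 where R2_N2: "splitter_reachable c R2 N2" and N2: "splitter_normal_form c N2"
    using exists_splitter_normal_form assms(2) by blast
  have "inj (($) N2)"
    using N2 orthogonal_matrix_inj_rows
    unfolding splitter_normal_form_def real_balanced_four_splitter_def by blast
  then obtain p where "p permutes UNIV" and "N2 = permute_rows p N1"
    using permute_rows_if_rows_mem splitter_normal_form_row_mem[OF N1 N2] by metis
  note R1_N1
  also have "splitter_reachable c N1 N2"
    using splitter_reachable_step splitter_step.perm \<open>p permutes UNIV\<close> \<open>N2 = _\<close> by metis
  also have "splitter_reachable c N2 R2"
    using splitter_reachable_sym[OF R2_N2] .
  finally show ?thesis .
qed

end
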